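(* Let $H=\mathbb C^m$ and let $\phi\colon M_n\to M_m$ be linear. Then $\phi$ is positive if and only if $C_{\phi^t}\in P(M_n,S(H))$, if and only if $C_\phi\in P(M_n,S(H))$. Hence $P(M_n,S(H))=\{C_\phi:\phi\colon M_n\to M_m \text{ linear and positive}\}$.
   Context: $M_n$ denotes the complex $n\times n$ matrices, $(e_{ij})$ a complete set of matrix units of $M_n$, $t$ the transpose map, $\phi^t=t\circ\phi\circ t$, and $C_\phi=\sum_{i,j}e_{ij}\otimes\phi(e_{ij})\in M_n\otimes M_m$ the Choi matrix of $\phi$. $S(H)$ is the closed cone of linear maps $M_m\to M_m$ generated by maps $x\mapsto\sum_{i=1}^k\omega_i(x)a_i$ with $\omega_i$ states of $M_m$ and $a_i\in M_m$ positive. $P(M_n,S(H))=\{x\in M_n\otimes M_m:(\iota\otimes\alpha)(x)\ge0\ \forall\alpha\in S(H)\}$, where $\iota$ is the identity map of $M_n$. *)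

theory Defs
  imports "HOL-Analysis.Analysis"
begin

text \<open>Complex n x n matrices are modelled as complex^'n^'n ('n a finite type, n = CARD('n)).
  The tensor product M_n (x) M_m is modelled as complex^('n*'m)^('n*'m), with the
  Kronecker convention (a (x) b) at ((i,k),(j,l)) = a at (i,j) times b at (k,l).\<close>

definition cnonneg :: "complex \<Rightarrow> bool" where
  "cnonneg z \<longleftrightarrow> Im z = 0 \<and> 0 \<le> Re z"

definition psd :: "complex^'k^'k \<Rightarrow> bool" where
  "psd A \<longleftrightarrow> (\<forall>v :: complex^'k. cnonneg (\<Sum>i\<in>UNIV. \<Sum>j\<in>UNIV. cnj (v $ i) * A $ i $ j * v $ j))"

definition smat :: "complex \<Rightarrow> complex^'k^'l \<Rightarrow> complex^'k^'l" where
  "smat c A = (\<chi> i j. c * A $ i $ j)"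

definition mlinear :: "(complex^'a^'a \<Rightarrow> complex^'b^'b) \<Rightarrow> bool" where
  "mlinear f \<longleftrightarrow> (\<forall>A B. f (A + B) = f A + f B) \<and> (\<forall>c A. f (smat c A) = smat c (f A))"

definition flinear :: "(complex^'a^'a \<Rightarrow> complex) \<Rightarrow> bool" where
  "flinear f \<longleftrightarrow> (\<forall>A B. f (A + B) = f A + f B) \<and> (\<forall>c A. f (smat c A) = c * f A)"

definition positive_map :: "(complex^'a^'a \<Rightarrow> complex^'b^'b) \<Rightarrow> bool" where
  "positive_map f \<longleftrightarrow> (\<forall>A. psd A \<longrightarrow> psd (f A))"

definition state :: "(complex^'a^'a \<Rightarrow> complex) \<Rightarrow> bool" where
  "state w \<longleftrightarrow> flinear w \<and> (\<forall>A. psd A \<longrightarrow> cnonneg (w A)) \<and> w (mat 1) = 1"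

definition transpose_map :: "(complex^'a^'a \<Rightarrow> complex^'b^'b) \<Rightarrow> (complex^'a^'a \<Rightarrow> complex^'b^'b)" where
  "transpose_map f = transpose \<circ> f \<circ> transpose"

definition matunit :: "'a \<Rightarrow> 'a \<Rightarrow> complex^'a^'a" where
  "matunit i j = (\<chi> a b. if a = i \<and> b = j then 1 else 0)"

definition kron :: "complex^'a^'a \<Rightarrow> complex^'b^'b \<Rightarrow> complex^('a \<times> 'b)^('a \<times> 'b)" where
  "kron A B = (\<chi> p q. A $ fst p $ fst q * B $ snd p $ snd q)"

definition choi :: "(complex^'a^'a \<Rightarrow> complex^'b^'b) \<Rightarrow> complex^('a \<times> 'b)^('a \<times> 'b)" where
  "choi f = (\<Sum>i\<in>UNIV. \<Sum>j\<in>UNIV. kron (matunit i j) (f (matunit i j)))"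

definition S_gen :: "(complex^'b^'b \<Rightarrow> complex^'b^'b) set" where
  "S_gen = {(\<lambda>x. \<Sum>i<k. smat (w i x) (a i)) | (k::nat) (w :: nat \<Rightarrow> complex^'b^'b \<Rightarrow> complex) (a :: nat \<Rightarrow> complex^'b^'b).
              (\<forall>i<k. state (w i) \<and> psd (a i))}"

definition S_cone :: "(complex^'b^'b \<Rightarrow> complex^'b^'b) set" where
  "S_cone = {(\<lambda>x. \<Sum>j<N. c j *\<^sub>R g j x) | (N::nat) (c :: nat \<Rightarrow> real) (g :: nat \<Rightarrow> complex^'b^'b \<Rightarrow> complex^'b^'b). (\<forall>j<N. 0 \<le> c j \<and> g j \<in> S_gen)}"

text \<open>S(H): the closed cone (closure in the natural topology on maps M_m \<rightarrow> M_m,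
  i.e. pointwise convergence, which agrees with the norm topology on linear maps).\<close>
definition SH :: "(complex^'b^'b \<Rightarrow> complex^'b^'b) set" where
  "SH = closure S_cone"

text \<open>(iota (x) alpha)(x): apply alpha to each n-block of x.\<close>
definition id_tensor :: "(complex^'b^'b \<Rightarrow> complex^'b^'b) \<Rightarrow> complex^('a::finite \<times> 'b)^('a \<times> 'b) \<Rightarrow> complex^('a \<times> 'b)^('a \<times> 'b)" where
  "id_tensor \<alpha> x = (\<chi> p q. \<alpha> (\<chi> k l. x $ (fst p, k) $ (fst q, l)) $ snd p $ snd q)"

definition PMS :: "(complex^('a::finite \<times> 'b::finite)^('a \<times> 'b)) set" where
  "PMS = {x. \<forall>\<alpha>\<in>SH. psd (id_tensor \<alpha> x)}"

end

theory Submission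
  imports Defs
begin

(*
  If \<psi> is positive, then for a generator \<alpha>(x) = \<Sum> \<omega>\<^sub>i(x) a\<^sub>i of S(H) the form
  z\<^sup>* (\<iota> \<otimes> \<alpha>)(C\<^sub>\<psi>) z equals \<Sum> \<omega>\<^sub>i(\<psi>(B\<^sup>* a\<^sub>i B)) for a matrix B read off from z, hence is
  nonnegative; this survives nonnegative combinations and, being a closed condition on \<alpha>,
  the closure. Conversely, for a vector state \<omega>\<^sub>v the map \<omega>\<^sub>v(\<cdot>) 1 lies in S(H), so
  (\<omega>\<^sub>v(\<psi>(e\<^sub>i\<^sub>j)))\<^sub>i\<^sub>j is positive, and pairing it entrywise with a positive A (written as a sum
  of rank-one matrices) gives \<omega>\<^sub>v(\<psi>(A)) \<ge> 0. Since the transpose preserves positivity,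
  \<phi> and \<phi>\<^sup>t are positive together, and every matrix is the Choi matrix of some linear map.
*)

lemma cnonneg_sum: "(\<And>x. x \<in> S \<Longrightarrow> cnonneg (f x)) \<Longrightarrow> cnonneg (sum f S)"
  unfolding cnonneg_def by (simp add: Im_sum Re_sum sum_nonneg)

lemma cnonneg_divide_of_real_iff: "0 < r \<Longrightarrow> cnonneg (z / of_real r) \<longleftrightarrow> cnonneg z"
  by (simp add: cnonneg_def zero_le_divide_iff)

lemma mult_if_zero:
  "(if P then x else 0) * (y::'a::mult_zero) = (if P then x * y else 0)"
  "(y::'a::mult_zero) * (if P then x else 0) = (if P then y * x else 0)"
  "cnj (if P then z else 0) = (if P then cnj z else 0)"
  by auto

lemma sum_if_zero: "(\<Sum>x\<in>S. if P then f x else 0) = (if P then sum f S else 0)"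
  by simp

lemma sum_sum_delta:
  fixes f :: "'a::finite \<Rightarrow> 'b::finite \<Rightarrow> 'c::comm_monoid_add"
  shows "(\<Sum>x\<in>UNIV. \<Sum>y\<in>UNIV. if a = x \<and> b = y then f x y else 0) = f a b"
    and "(\<Sum>x\<in>UNIV. \<Sum>y\<in>UNIV. if x = a \<and> y = b then f x y else 0) = f a b"
proof -
  have "(\<Sum>y\<in>UNIV. if a = x \<and> b = y then f x y else 0) = (if a = x then f x b else 0)" for x
    by (cases "a = x") simp_all
  then show "(\<Sum>x\<in>UNIV. \<Sum>y\<in>UNIV. if a = x \<and> b = y then f x y else 0) = f a b" by simp
  then show "(\<Sum>x\<in>UNIV. \<Sum>y\<in>UNIV. if x = a \<and> y = b then f x y else 0) = f a b"
    by (simp add: eq_commute)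
qed

lemma sum_UNIV_prod: "(\<Sum>p\<in>UNIV. f p) = (\<Sum>a\<in>UNIV. \<Sum>b\<in>UNIV. f (a, b))"
  by (simp add: sum.cartesian_product)

lemma sum_swap_pairs:
  "(\<Sum>i\<in>A. \<Sum>j\<in>B. \<Sum>k\<in>C. \<Sum>l\<in>D. f i j k l) = (\<Sum>k\<in>C. \<Sum>l\<in>D. \<Sum>i\<in>A. \<Sum>j\<in>B. f i j k l)"
proof -
  have "(\<Sum>i\<in>A. \<Sum>j\<in>B. \<Sum>k\<in>C. \<Sum>l\<in>D. f i j k l) = (\<Sum>i\<in>A. \<Sum>k\<in>C. \<Sum>j\<in>B. \<Sum>l\<in>D. f i j k l)"
    by (rule sum.cong[OF refl], rule sum.swap)
  also have "\<dots> = (\<Sum>i\<in>A. \<Sum>k\<in>C. \<Sum>l\<in>D. \<Sum>j\<in>B. f i j k l)"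
    by (rule sum.cong[OF refl], rule sum.cong[OF refl], rule sum.swap)
  also have "\<dots> = (\<Sum>k\<in>C. \<Sum>i\<in>A. \<Sum>l\<in>D. \<Sum>j\<in>B. f i j k l)"
    by (rule sum.swap)
  also have "\<dots> = (\<Sum>k\<in>C. \<Sum>l\<in>D. \<Sum>i\<in>A. \<Sum>j\<in>B. f i j k l)"
    by (rule sum.cong[OF refl], rule sum.swap)
  finally show ?thesis .
qed

definition qform :: "'k set \<Rightarrow> ('k \<Rightarrow> 'k \<Rightarrow> complex) \<Rightarrow> ('k \<Rightarrow> complex) \<Rightarrow> complex" where
  "qform S A v = (\<Sum>i\<in>S. \<Sum>j\<in>S. cnj (v i) * A i j * v j)"

definition psd_on :: "'k set \<Rightarrow> ('k \<Rightarrow> 'k \<Rightarrow> complex) \<Rightarrow> bool" where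
  "psd_on S A \<longleftrightarrow> (\<forall>v. cnonneg (qform S A v))"

lemma psd_iff_psd_on: "psd M \<longleftrightarrow> psd_on UNIV (\<lambda>i j. M $ i $ j)"
  unfolding psd_def psd_on_def qform_def
proof (intro iffI allI)
  fix v :: "'a \<Rightarrow> complex"
  assume "\<forall>v::complex^'a. cnonneg (\<Sum>i\<in>UNIV. \<Sum>j\<in>UNIV. cnj (v $ i) * M $ i $ j * v $ j)"
  from this[rule_format, of "\<chi> k. v k"]
  show "cnonneg (\<Sum>i\<in>UNIV. \<Sum>j\<in>UNIV. cnj (v i) * M $ i $ j * v j)" by simp
qed simp

lemma qform_two_points:
  assumes "finite S" "i \<in> S" "j \<in> S"
  shows "qform S A (\<lambda>k. (if k = i then a else 0) + (if k = j then b else 0))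
       = cnj a * (A i i * a + A i j * b) + cnj b * (A j i * a + A j j * b)"
  using assms by (simp add: qform_def distrib_left distrib_right sum.distrib mult_if_zero sum.delta sum.delta')

lemma psd_on_diag_nonneg:
  assumes "finite S" "psd_on S A" "p \<in> S"
  shows "cnonneg (A p p)"
proof -
  have "cnonneg (qform S A (\<lambda>k. (if k = p then 1 else 0) + (if k = p then 0 else 0)))"
    using assms(2) psd_on_def by blast
  then show ?thesis unfolding qform_two_points[OF assms(1,3,3)] by simp
qed

lemma psd_on_hermitian:
  assumes "finite S" "psd_on S A" "i \<in> S" "j \<in> S"
  shows "A j i = cnj (A i j)"
proof -
  have real_form: "Im (qform S A v) = 0" for v
    using assms(2) by (simp add: psd_on_def cnonneg_def)
  have "Im (A i i) = 0" "Im (A j j) = 0"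
    using psd_on_diag_nonneg[OF assms(1,2)] assms(3,4) by (auto simp: cnonneg_def)
  with real_form[of "\<lambda>k. (if k = i then 1 else 0) + (if k = j then 1 else 0)"]
       real_form[of "\<lambda>k. (if k = i then 1 else 0) + (if k = j then \<i> else 0)"]
  show ?thesis
    unfolding qform_two_points[OF assms(1,3,4)] by (simp add: complex_eq_iff algebra_simps)
qed

lemma psd_on_zero_diag_row:
  assumes "finite S" "psd_on S A" "p \<in> S" "j \<in> S" "A p p = 0"
  shows "A p j = 0"
proof (rule ccontr)
  assume "A p j \<noteq> 0"
  define x where "x = A p j"
  define m where "m = (Re x)\<^sup>2 + (Im x)\<^sup>2"
  have "m > 0" using \<open>A p j \<noteq> 0\<close> by (simp add: m_def x_def sum_power2_gt_zero_iff complex_eq_iff)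
  define s where "s = (Re (A j j) + 1) / (2 * m)"
  define t where "t = - of_real s * x"
  have "A j p = cnj x" using psd_on_hermitian[OF assms(1-4)] x_def by simp
  \<comment> \<open>testing the form on \<open>t e\<^sub>p + e\<^sub>j\<close> gives the value \<open>-1\<close>\<close>
  moreover have "cnonneg (qform S A (\<lambda>k. (if k = p then t else 0) + (if k = j then 1 else 0)))"
    using assms(2) psd_on_def by blast
  ultimately have "0 \<le> Re (cnj t * x + cnj x * t) + Re (A j j)"
    unfolding qform_two_points[OF assms(1,3,4)] cnonneg_def using assms(5) x_def
    by (simp add: algebra_simps)
  also have "Re (cnj t * x + cnj x * t) = - 2 * s * m"
    by (simp add: t_def m_def power2_eq_square algebra_simps)
  also have "\<dots> = - (Re (A j j) + 1)"
    using \<open>m > 0\<close> by (simp add: s_def)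
  finally show False by simp
qed

lemma qform_insert:
  assumes "finite T" "p \<notin> T"
  shows "qform (insert p T) A v = cnj (v p) * A p p * v p + cnj (v p) * (\<Sum>j\<in>T. A p j * v j)
      + (\<Sum>i\<in>T. cnj (v i) * A i p) * v p + qform T A v"
  using assms by (simp add: qform_def sum.distrib sum_distrib_left sum_distrib_right algebra_simps)

lemma psd_on_subset:
  assumes "finite S" "psd_on S A" "T \<subseteq> S"
  shows "psd_on T A"
  unfolding psd_on_def
proof
  fix v
  have "qform T A v = qform S A (\<lambda>k. if k \<in> T then v k else 0)"
    unfolding qform_def using assms(1,3)
    by (intro sum.mono_neutral_cong_left) (auto intro!: sum.mono_neutral_cong_left)
  then show "cnonneg (qform T A v)" using assms(2) psd_on_def by metis
qed

lemma psd_on_schur_complement: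
  assumes "finite T" "p \<notin> T" "psd_on (insert p T) A"
  shows "psd_on T (\<lambda>i j. A i j - A i p * A p j / A p p)"
proof (cases "A p p = 0")
  case True
  \<comment> \<open>then \<open>x / 0 = 0\<close> makes the complement \<open>A\<close> itself\<close>
  then show ?thesis using psd_on_subset[OF _ assms(3)] assms(1) by (simp add: subset_insertI)
next
  case False
  have fin: "finite (insert p T)" using assms(1) by simp
  have herm: "A i p = cnj (A p i)" if "i \<in> T" for i
    using psd_on_hermitian[OF fin assms(3), of p i] that by simp
  have "cnj (A p p) = A p p"
    using psd_on_diag_nonneg[OF fin assms(3)] by (simp add: cnonneg_def complex_eq_iff)
  show ?thesis unfolding psd_on_def
  proof
    fix v
    define c where "c = (\<Sum>j\<in>T. A p j * v j)"
    have c_cnj: "(\<Sum>i\<in>T. cnj (v i) * A i p) = cnj c"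
      unfolding c_def cnj_sum by (intro sum.cong refl) (simp add: herm mult.commute)
    \<comment> \<open>minimise the form over the \<open>p\<close>-coordinate\<close>
    define t where "t = - c / A p p"
    have "qform (insert p T) A (v(p := t)) = cnj t * A p p * t + cnj t * c + cnj c * t + qform T A v"
    proof -
      have "qform T A (v(p := t)) = qform T A v" "(\<Sum>j\<in>T. A p j * (v(p := t)) j) = c"
        "(\<Sum>i\<in>T. cnj ((v(p := t)) i) * A i p) = (\<Sum>i\<in>T. cnj (v i) * A i p)"
        using assms(2) by (auto simp: qform_def c_def intro!: sum.cong)
      then show ?thesis using qform_insert[OF assms(1,2), of A "v(p := t)"] c_cnj by simp
    qed
    also have "\<dots> = qform T A v - cnj c * c / A p p"
      using False \<open>cnj (A p p) = A p p\<close> by (simp add: t_def field_simps)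
    also have "\<dots> = qform T (\<lambda>i j. A i j - A i p * A p j / A p p) v"
    proof -
      have "cnj c * c = (\<Sum>i\<in>T. \<Sum>j\<in>T. cnj (v i) * (A i p * A p j) * v j)"
        unfolding c_cnj[symmetric] unfolding c_def sum_product by (intro sum.cong refl) (simp add: ac_simps)
      then show ?thesis
        by (simp add: qform_def right_diff_distrib left_diff_distrib sum_subtractf sum_divide_distrib)
    qed
    finally show "cnonneg (qform T (\<lambda>i j. A i j - A i p * A p j / A p p) v)"
      using assms(3) psd_on_def by metis
  qed
qed

lemma psd_on_gram:
  assumes "finite S" "psd_on S A"
  shows "\<exists>N w. \<forall>i\<in>S. \<forall>j\<in>S. A i j = (\<Sum>r<(N::nat). w r i * cnj (w r j))"
  using assms
proof (induction S arbitrary: A rule: finite_induct)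
  case empty
  then show ?case by auto
next
  case (insert p T)
  let ?S = "insert p T"
  have fin: "finite ?S" using insert.hyps by simp
  have herm: "cnj (A j p) = A p j" if "j \<in> ?S" for j
    using psd_on_hermitian[OF fin insert.prems _ that, of p] by simp
  define d where "d = Re (A p p)"
  have d: "A p p = of_real d" "0 \<le> d"
    using psd_on_diag_nonneg[OF fin insert.prems, of p] by (simp_all add: d_def cnonneg_def complex_eq_iff)
  obtain N w where w: "\<forall>i\<in>T. \<forall>j\<in>T. A i j - A i p * A p j / A p p = (\<Sum>r<(N::nat). w r i * cnj (w r j))"
    using insert.IH[OF psd_on_schur_complement[OF insert.hyps insert.prems]] by blast
  \<comment> \<open>\<open>A\<close> is its Schur complement plus \<open>u u\<^sup>*\<close> (\<open>u = 0\<close> if \<open>A p p = 0\<close>, when row \<open>p\<close> vanishes)\<close>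
  define u where "u k = A k p / of_real (sqrt d)" for k
  have rank_one: "u i * cnj (u j) = A i p * A p j / A p p" if "j \<in> ?S" for i j
  proof -
    have "(of_real (sqrt d) :: complex) * of_real (sqrt d) = of_real d"
      using d(2) by (simp flip: of_real_mult)
    then show ?thesis
      unfolding u_def d(1) using herm[OF that] by (simp add: times_divide_times_eq)
  qed
  have border: "A i j = A i p * A p j / A p p" if "i \<in> ?S" "j \<in> ?S" "i = p \<or> j = p" for i j
  proof (cases "A p p = 0")
    case True
    then have "A p j = 0" "A p i = 0"
      using psd_on_zero_diag_row[OF fin insert.prems] that by auto
    then show ?thesis using that herm[of i] by auto
  next
    case False
    then show ?thesis using that by auto
  qed
  define W where "W r k = (if r < N then (if k = p then 0 else w r k) else u k)" for r k
  have "A i j = (\<Sum>r<Suc N. W r i * cnj (W r j))" if "i \<in> ?S" "j \<in> ?S" for i j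
  proof -
    have "(\<Sum>r<Suc N. W r i * cnj (W r j)) = (\<Sum>r<N. W r i * cnj (W r j)) + A i p * A p j / A p p"
      using rank_one[OF that(2)] by (simp add: W_def)
    moreover have "(\<Sum>r<N. W r i * cnj (W r j)) = A i j - A i p * A p j / A p p"
      using w that border[OF that] by (cases "i = p \<or> j = p") (auto simp: W_def)
    ultimately show ?thesis by simp
  qed
  then show ?case by blast
qed

lemma psd_pairing_nonneg:
  fixes A W :: "complex^'k^'k"
  assumes "psd A" "psd W"
  shows "cnonneg (\<Sum>i\<in>UNIV. \<Sum>j\<in>UNIV. A $ i $ j * W $ i $ j)"
proof -
  obtain N w where w: "\<And>i j. A $ i $ j = (\<Sum>r<(N::nat). w r i * cnj (w r j))"
    using psd_on_gram[of UNIV "\<lambda>i j. A $ i $ j"] assms(1) unfolding psd_iff_psd_on by auto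
  have "(\<Sum>i\<in>UNIV. \<Sum>j\<in>UNIV. A $ i $ j * W $ i $ j)
      = (\<Sum>i\<in>UNIV. \<Sum>j\<in>UNIV. \<Sum>r<N. w r i * cnj (w r j) * W $ i $ j)"
    by (simp add: w sum_distrib_right)
  also have "\<dots> = (\<Sum>r<N. \<Sum>i\<in>UNIV. \<Sum>j\<in>UNIV. w r i * cnj (w r j) * W $ i $ j)"
    by (simp add: sum.swap[where A = "{..<N}"])
  also have "\<dots> = (\<Sum>r<N. qform UNIV (\<lambda>i j. W $ i $ j) (\<lambda>k. cnj (w r k)))"
    unfolding qform_def by (simp add: ac_simps)
  also have "cnonneg \<dots>"
    using assms(2) unfolding psd_iff_psd_on psd_on_def by (intro cnonneg_sum) auto
  finally show ?thesis .
qed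

lemma smat_zero: "smat 0 A = 0"
  by (simp add: smat_def vec_eq_iff)

lemma mlinear_zero: "mlinear f \<Longrightarrow> f 0 = 0"
  unfolding mlinear_def by (metis smat_zero)

lemma flinear_zero: "flinear f \<Longrightarrow> f 0 = 0"
  unfolding flinear_def by (metis smat_zero mult_zero_left)

lemma mlinear_sum: "mlinear f \<Longrightarrow> f (sum g S) = (\<Sum>x\<in>S. f (g x))"
proof (induction S rule: infinite_finite_induct)
  case (insert x F)
  then show ?case by (simp add: mlinear_def)
qed (simp_all add: mlinear_zero)

lemma flinear_sum: "flinear f \<Longrightarrow> f (sum g S) = (\<Sum>x\<in>S. f (g x))"
proof (induction S rule: infinite_finite_induct)
  case (insert x F)
  then show ?case by (simp add: flinear_def)
qed (simp_all add: flinear_zero)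

lemma matrix_eq_sum_matunit: "X = (\<Sum>i\<in>UNIV. \<Sum>j\<in>UNIV. smat (X $ i $ j) (matunit i j))"
  by (simp add: vec_eq_iff smat_def matunit_def mult_if_zero if_distrib[where f = "\<lambda>x. x $ _"]
      sum_sum_delta cong: if_cong)

lemma mlinear_expansion:
  assumes "mlinear f"
  shows "f X = (\<Sum>i\<in>UNIV. \<Sum>j\<in>UNIV. smat (X $ i $ j) (f (matunit i j)))"
  using assms by (subst matrix_eq_sum_matunit) (simp add: mlinear_sum mlinear_def)

lemma flinear_mlinear_expansion:
  assumes "flinear w" "mlinear f"
  shows "w (f X) = (\<Sum>i\<in>UNIV. \<Sum>j\<in>UNIV. X $ i $ j * w (f (matunit i j)))"
  using assms by (subst mlinear_expansion) (simp_all add: flinear_sum flinear_def)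

lemma id_tensor_choi:
  "id_tensor \<alpha> (choi \<psi>) = (\<chi> p q. \<alpha> (\<psi> (matunit (fst p) (fst q))) $ snd p $ snd q)"
proof -
  have "(\<chi> k l. choi \<psi> $ (i, k) $ (j, l)) = \<psi> (matunit i j)" for i j
    by (simp add: vec_eq_iff choi_def kron_def matunit_def mult_if_zero sum_sum_delta
        if_distrib[where f = "\<lambda>x. x $ _"] cong: if_cong)
  then show ?thesis unfolding id_tensor_def by simp
qed

definition choi_form ::
    "(complex^'m^'m \<Rightarrow> complex^'m^'m) \<Rightarrow> (complex^'n^'n \<Rightarrow> complex^'m^'m) \<Rightarrow> complex^('n \<times> 'm) \<Rightarrow> complex"
  where "choi_form \<alpha> \<psi> z = (\<Sum>p\<in>UNIV. \<Sum>q\<in>UNIV.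
           cnj (z $ p) * \<alpha> (\<psi> (matunit (fst p) (fst q))) $ snd p $ snd q * z $ q)"

lemma psd_id_tensor_choi_iff: "psd (id_tensor \<alpha> (choi \<psi>)) \<longleftrightarrow> (\<forall>z. cnonneg (choi_form \<alpha> \<psi> z))"
  unfolding id_tensor_choi psd_def choi_form_def by simp

lemma choi_form_sum: "choi_form (\<lambda>x. \<Sum>j\<in>J. h j x) \<psi> z = (\<Sum>j\<in>J. choi_form (h j) \<psi> z)"
  unfolding choi_form_def
  by (simp add: sum_distrib_left sum_distrib_right sum.swap[where A = J])

lemma choi_form_scaleR: "choi_form (\<lambda>x. c *\<^sub>R g x) \<psi> z = of_real c * choi_form g \<psi> z"
  unfolding choi_form_def vector_scaleR_component unfolding scaleR_conv_of_real by (simp add: sum_distrib_left ac_simps)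

text \<open>\<open>compress z a = B\<^sup>* a B\<close>, where \<open>B\<close> is the \<open>m \<times> n\<close> matrix with entries \<open>B k i = z (i, k)\<close>.\<close>

definition compress :: "complex^('n \<times> 'm) \<Rightarrow> complex^'m^'m \<Rightarrow> complex^'n^'n" where
  "compress z a = (\<chi> i j. \<Sum>k\<in>UNIV. \<Sum>l\<in>UNIV. cnj (z $ (i, k)) * a $ k $ l * z $ (j, l))"

lemma psd_compress:
  fixes z :: "complex^('n::finite \<times> 'm::finite)"
  assumes "psd a"
  shows "psd (compress z a)"
  unfolding psd_iff_psd_on psd_on_def
proof
  fix u :: "'n \<Rightarrow> complex"
  have "qform UNIV (\<lambda>i j. compress z a $ i $ j) u
      = (\<Sum>i\<in>UNIV. \<Sum>j\<in>UNIV. \<Sum>k\<in>UNIV. \<Sum>l\<in>UNIV. cnj (z $ (i, k) * u i) * a $ k $ l * (z $ (j, l) * u j))"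
    unfolding qform_def compress_def by (simp add: sum_distrib_left sum_distrib_right ac_simps)
  also have "\<dots> = (\<Sum>k\<in>UNIV. \<Sum>l\<in>UNIV. \<Sum>i\<in>UNIV. \<Sum>j\<in>UNIV. cnj (z $ (i, k) * u i) * a $ k $ l * (z $ (j, l) * u j))"
    by (rule sum_swap_pairs)
  also have "\<dots> = qform UNIV (\<lambda>k l. a $ k $ l) (\<lambda>l. \<Sum>j\<in>UNIV. z $ (j, l) * u j)"
    unfolding qform_def cnj_sum by (simp add: sum_distrib_left sum_distrib_right ac_simps)
  finally show "cnonneg (qform UNIV (\<lambda>i j. compress z a $ i $ j) u)"
    using assms unfolding psd_iff_psd_on psd_on_def by simp
qed

lemma choi_form_state_generator:
  fixes \<psi> :: "complex^'n^'n \<Rightarrow> complex^'m^'m"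
  assumes "flinear w" "mlinear \<psi>"
  shows "choi_form (\<lambda>x. smat (w x) a) \<psi> z = w (\<psi> (compress z a))"
proof -
  have "choi_form (\<lambda>x. smat (w x) a) \<psi> z = (\<Sum>i\<in>UNIV. \<Sum>k\<in>UNIV. \<Sum>j\<in>UNIV. \<Sum>l\<in>UNIV.
      cnj (z $ (i, k)) * a $ k $ l * z $ (j, l) * w (\<psi> (matunit i j)))"
    unfolding choi_form_def sum_UNIV_prod fst_conv snd_conv smat_def vec_lambda_beta
    by (intro sum.cong refl) (simp only: ac_simps)
  also have "\<dots> = (\<Sum>i\<in>UNIV. \<Sum>j\<in>UNIV. \<Sum>k\<in>UNIV. \<Sum>l\<in>UNIV.
      cnj (z $ (i, k)) * a $ k $ l * z $ (j, l) * w (\<psi> (matunit i j)))"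
    by (rule sum.cong[OF refl], rule sum.swap)
  also have "\<dots> = (\<Sum>i\<in>UNIV. \<Sum>j\<in>UNIV. compress z a $ i $ j * w (\<psi> (matunit i j)))"
    unfolding compress_def vec_lambda_beta sum_distrib_right ..
  also have "\<dots> = w (\<psi> (compress z a))"
    by (rule flinear_mlinear_expansion[OF assms, symmetric])
  finally show ?thesis .
qed

lemma continuous_on_eval_entry: "continuous_on UNIV (\<lambda>\<alpha>::'x \<Rightarrow> complex^'m^'m. \<alpha> X $ a $ b)"
proof -
  have evaluation: "continuous_on UNIV (\<lambda>\<alpha>::'x \<Rightarrow> complex^'m^'m. \<alpha> X)"
    by (rule continuous_on_product_coordinates)
  have entry: "continuous_on UNIV (\<lambda>v::complex^'m^'m. v $ a $ b)"
    by (intro linear_continuous_on bounded_linear_compose[OF bounded_linear_vec_nth bounded_linear_vec_nth])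
  show ?thesis using continuous_on_compose2[OF entry evaluation] by simp
qed

lemma closed_choi_form_nonneg: "closed {\<alpha>. cnonneg (choi_form \<alpha> \<psi> z)}"
proof -
  have cont: "continuous_on UNIV (\<lambda>\<alpha>. choi_form \<alpha> \<psi> z)"
    unfolding choi_form_def by (intro continuous_intros continuous_on_eval_entry)
  have "{\<alpha>. cnonneg (choi_form \<alpha> \<psi> z)} = {\<alpha>. Im (choi_form \<alpha> \<psi> z) = 0} \<inter> {\<alpha>. 0 \<le> Re (choi_form \<alpha> \<psi> z)}"
    unfolding cnonneg_def by auto
  moreover have "closed {\<alpha>. Im (choi_form \<alpha> \<psi> z) = 0}"
    by (intro closed_Collect_eq continuous_on_Im cont continuous_on_const)
  moreover have "closed {\<alpha>. 0 \<le> Re (choi_form \<alpha> \<psi> z)}"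
    by (intro closed_Collect_le continuous_on_Re cont continuous_on_const)
  ultimately show ?thesis by auto
qed

lemma choi_form_nonneg_S_cone:
  assumes "mlinear \<psi>" "positive_map \<psi>" "\<alpha> \<in> S_cone"
  shows "cnonneg (choi_form \<alpha> \<psi> z)"
proof -
  have generator: "cnonneg (choi_form g \<psi> z)" if "g \<in> S_gen" for g
  proof -
    from that obtain k w a where g: "g = (\<lambda>x. \<Sum>i<(k::nat). smat (w i x) (a i))"
      and wa: "\<forall>i<k. state (w i) \<and> psd (a i)"
      unfolding S_gen_def by blast
    have "choi_form g \<psi> z = (\<Sum>i<k. w i (\<psi> (compress z (a i))))"
      using wa assms(1) by (auto simp: g choi_form_sum state_def choi_form_state_generator)
    also have "cnonneg \<dots>"
    proof (rule cnonneg_sum)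
      fix i assume "i \<in> {..<k}"
      then have "state (w i)" "psd (a i)" using wa by auto
      then show "cnonneg (w i (\<psi> (compress z (a i))))"
        using assms(2) psd_compress unfolding state_def positive_map_def by blast
    qed
    finally show ?thesis .
  qed
  from assms(3) obtain N c g where "\<alpha> = (\<lambda>x. \<Sum>j<(N::nat). c j *\<^sub>R g j x)"
    and cg: "\<forall>j<N. 0 \<le> c j \<and> g j \<in> S_gen"
    unfolding S_cone_def by blast
  then have "choi_form \<alpha> \<psi> z = (\<Sum>j<N. of_real (c j) * choi_form (g j) \<psi> z)"
    by (simp add: choi_form_sum choi_form_scaleR)
  also have "cnonneg \<dots>"
    using cg generator by (intro cnonneg_sum) (auto simp: cnonneg_def)
  finally show ?thesis .
qed

lemma positive_map_choi_in_PMS: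
  assumes "mlinear \<psi>" "positive_map \<psi>"
  shows "choi \<psi> \<in> PMS"
proof -
  have "SH \<subseteq> {\<alpha>. cnonneg (choi_form \<alpha> \<psi> z)}" for z
    unfolding SH_def using choi_form_nonneg_S_cone[OF assms] closed_choi_form_nonneg
    by (intro closure_minimal) auto
  then show ?thesis
    unfolding PMS_def mem_Collect_eq psd_id_tensor_choi_iff by blast
qed

lemma qform_mat_1: "qform UNIV (\<lambda>i j. mat 1 $ i $ j) v = of_real (\<Sum>i\<in>UNIV. (cmod (v i))\<^sup>2)"
proof -
  have "qform UNIV (\<lambda>i j. mat 1 $ i $ j) v = (\<Sum>i\<in>UNIV. v i * cnj (v i))"
    by (simp add: qform_def mat_def mult_if_zero sum.delta mult.commute cong: if_cong)
  also have "\<dots> = of_real (\<Sum>i\<in>UNIV. (cmod (v i))\<^sup>2)"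
    unfolding of_real_sum complex_norm_square ..
  finally show ?thesis .
qed

lemma psd_mat_1: "psd (mat 1 :: complex^'k^'k)"
  unfolding psd_iff_psd_on psd_on_def qform_mat_1 by (simp add: cnonneg_def sum_nonneg)

definition vector_state :: "complex^'k \<Rightarrow> complex^'k^'k \<Rightarrow> complex" where
  "vector_state v y = qform UNIV (\<lambda>i j. y $ i $ j) (vec_nth v) / of_real ((norm v)\<^sup>2)"

lemma norm_vec_power2: "(norm v)\<^sup>2 = (\<Sum>i\<in>UNIV. (cmod (v $ i))\<^sup>2)"
  by (simp add: norm_vec_def L2_set_def sum_nonneg)

lemma state_vector_state:
  assumes "v \<noteq> 0"
  shows "state (vector_state v)"
proof -
  have "norm v > 0" using assms by simp
  have "flinear (vector_state v)"
    unfolding flinear_def vector_state_def qform_def smat_def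
    by (simp add: distrib_left distrib_right sum.distrib add_divide_distrib sum_distrib_left ac_simps)
  moreover have "cnonneg (vector_state v A)" if "psd A" for A
    using that \<open>norm v > 0\<close> unfolding psd_iff_psd_on psd_on_def vector_state_def cnonneg_def
    by simp
  moreover have "vector_state v (mat 1) = 1"
    using \<open>norm v > 0\<close> unfolding vector_state_def qform_mat_1 norm_vec_power2[symmetric] by simp
  ultimately show ?thesis unfolding state_def by blast
qed

lemma S_gen_subset_SH: "S_gen \<subseteq> SH"
proof
  fix g assume "g \<in> S_gen"
  then have "g \<in> S_cone"
    unfolding S_cone_def by (intro CollectI exI[of _ 1] exI[of _ "\<lambda>_. 1"] exI[of _ "\<lambda>_. g"]) auto
  then show "g \<in> SH" unfolding SH_def using closure_subset by blast
qed

lemma state_times_one_in_S_gen: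
  assumes "state \<omega>"
  shows "(\<lambda>x. smat (\<omega> x) (mat 1)) \<in> S_gen"
  unfolding S_gen_def using assms psd_mat_1
  by (intro CollectI exI[of _ 1] exI[of _ "\<lambda>_. \<omega>"] exI[of _ "\<lambda>_. mat 1"]) auto

lemma PMS_choi_state_psd:
  fixes \<psi> :: "complex^'n^'n \<Rightarrow> complex^'m^'m"
  assumes "choi \<psi> \<in> PMS" "state \<omega>"
  shows "psd (\<chi> i j. \<omega> (\<psi> (matunit i j)))"
  unfolding psd_def
proof
  fix u :: "complex^'n"
  define W where "W = (\<chi> i j. \<omega> (\<psi> (matunit i j)) :: complex^'n^'n)"
  \<comment> \<open>test \<open>\<iota> \<otimes> \<omega>(\<cdot>)1\<close> on the vector \<open>u \<otimes> e\<^sub>k\<^sub>0\<close>\<close>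
  define k0 where "k0 = (undefined :: 'm)"
  define z where "z = (\<chi> p. if snd p = k0 then u $ fst p else 0 :: complex^('n \<times> 'm))"
  have "cnonneg (choi_form (\<lambda>x. smat (\<omega> x) (mat 1)) \<psi> z)"
    using assms state_times_one_in_S_gen S_gen_subset_SH
    unfolding PMS_def mem_Collect_eq psd_id_tensor_choi_iff by blast
  also have "choi_form (\<lambda>x. smat (\<omega> x) (mat 1)) \<psi> z = (\<Sum>i\<in>UNIV. \<Sum>j\<in>UNIV. cnj (u $ i) * W $ i $ j * u $ j)"
    unfolding choi_form_def sum_UNIV_prod
    by (simp add: z_def W_def smat_def mat_def mult_if_zero sum_if_zero
        sum.swap[where B = "UNIV :: 'm set"] cong: if_cong)
  finally show "cnonneg (\<Sum>i\<in>UNIV. \<Sum>j\<in>UNIV. cnj (u $ i) * (\<chi> i j. \<omega> (\<psi> (matunit i j))) $ i $ j * u $ j)"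
    by (simp add: W_def)
qed

lemma PMS_choi_positive_map:
  fixes \<psi> :: "complex^'n^'n \<Rightarrow> complex^'m^'m"
  assumes "mlinear \<psi>" "choi \<psi> \<in> PMS"
  shows "positive_map \<psi>"
  unfolding positive_map_def
proof (intro allI impI)
  fix A :: "complex^'n^'n"
  assume "psd A"
  show "psd (\<psi> A)" unfolding psd_def
  proof
    fix v :: "complex^'m"
    show "cnonneg (\<Sum>i\<in>UNIV. \<Sum>j\<in>UNIV. cnj (v $ i) * \<psi> A $ i $ j * v $ j)"
    proof (cases "v = 0")
      case True
      then show ?thesis by (simp add: cnonneg_def)
    next
      case False
      note state = state_vector_state[OF False]
      have "cnonneg (\<Sum>i\<in>UNIV. \<Sum>j\<in>UNIV. A $ i $ j * (\<chi> i j. vector_state v (\<psi> (matunit i j))) $ i $ j)"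
        using psd_pairing_nonneg[OF \<open>psd A\<close> PMS_choi_state_psd[OF assms(2) state]] .
      then have "cnonneg (vector_state v (\<psi> A))"
        using flinear_mlinear_expansion[OF _ assms(1)] state unfolding state_def by simp
      then show ?thesis
        using False cnonneg_divide_of_real_iff[of "(norm v)\<^sup>2"] unfolding vector_state_def qform_def
        by simp
    qed
  qed
qed

lemma choi_in_PMS_iff_positive_map:
  fixes \<psi> :: "complex^'n^'n \<Rightarrow> complex^'m^'m"
  assumes "mlinear \<psi>"
  shows "choi \<psi> \<in> PMS \<longleftrightarrow> positive_map \<psi>"
  using PMS_choi_positive_map[OF assms] positive_map_choi_in_PMS[OF assms] by blast

lemma psd_transpose:
  fixes A :: "complex^'k^'k"
  assumes "psd A"
  shows "psd (transpose A)"
  unfolding psd_def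
proof
  fix v :: "complex^'k"
  \<comment> \<open>\<open>v\<^sup>* A\<^sup>T v = w\<^sup>* A w\<close> for the conjugate vector \<open>w\<close>\<close>
  define w where "w = (\<chi> k. cnj (v $ k))"
  have "(\<Sum>i\<in>UNIV. \<Sum>j\<in>UNIV. cnj (v $ i) * transpose A $ i $ j * v $ j)
      = (\<Sum>j\<in>UNIV. \<Sum>i\<in>UNIV. cnj (v $ i) * A $ j $ i * v $ j)"
    unfolding transpose_def vec_lambda_beta by (rule sum.swap)
  also have "\<dots> = (\<Sum>i\<in>UNIV. \<Sum>j\<in>UNIV. cnj (w $ i) * A $ i $ j * w $ j)"
    by (simp add: w_def ac_simps)
  also have "cnonneg \<dots>"
    using assms unfolding psd_def by blast
  finally show "cnonneg (\<Sum>i\<in>UNIV. \<Sum>j\<in>UNIV. cnj (v $ i) * transpose A $ i $ j * v $ j)" .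
qed

lemma transpose_add_matrix: "transpose (A + B) = transpose A + transpose B"
  by (simp add: transpose_def vec_eq_iff)

lemma transpose_smat: "transpose (smat c A) = smat c (transpose A)"
  by (simp add: transpose_def smat_def vec_eq_iff)

lemma mlinear_transpose_map: "mlinear \<phi> \<Longrightarrow> mlinear (transpose_map \<phi>)"
  unfolding mlinear_def transpose_map_def by (simp add: transpose_add_matrix transpose_smat)

lemma positive_map_transpose_map_iff: "positive_map (transpose_map \<phi>) \<longleftrightarrow> positive_map \<phi>"
  unfolding positive_map_def transpose_map_def
  by (metis comp_apply psd_transpose transpose_transpose)

definition choi_map :: "complex^('n \<times> 'm)^('n \<times> 'm) \<Rightarrow> complex^'n^'n \<Rightarrow> complex^'m^'m" where
  "choi_map x X = (\<chi> k l. \<Sum>i\<in>UNIV. \<Sum>j\<in>UNIV. X $ i $ j * x $ (i, k) $ (j, l))"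

lemma mlinear_choi_map: "mlinear (choi_map x)"
  unfolding mlinear_def choi_map_def smat_def
  by (simp add: vec_eq_iff distrib_right sum.distrib sum_distrib_left mult.assoc)

lemma choi_choi_map: "choi (choi_map x) = x"
proof -
  have "choi_map x (matunit a b) = (\<chi> k l. x $ (a, k) $ (b, l))" for a b
    by (simp add: choi_map_def matunit_def mult_if_zero sum_sum_delta vec_eq_iff cong: if_cong)
  then show ?thesis
    by (simp add: choi_def kron_def matunit_def mult_if_zero sum_sum_delta vec_eq_iff
        if_distrib[where f = "\<lambda>x. x $ _"] cong: if_cong)
qed

lemma PMS_eq_choi_positive_maps:
  "(PMS :: (complex^('n::finite \<times> 'm::finite)^('n \<times> 'm)) set) = {choi \<psi> | \<psi>. mlinear \<psi> \<and> positive_map \<psi>}"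
proof (intro set_eqI iffI)
  fix x :: "complex^('n \<times> 'm)^('n \<times> 'm)"
  assume "x \<in> PMS"
  then have "positive_map (choi_map x)"
    using choi_in_PMS_iff_positive_map[OF mlinear_choi_map, of x] by (simp add: choi_choi_map)
  then show "x \<in> {choi \<psi> | \<psi>. mlinear \<psi> \<and> positive_map \<psi>}"
    unfolding mem_Collect_eq by (intro exI[of _ "choi_map x"]) (simp add: choi_choi_map mlinear_choi_map)
next
  fix x :: "complex^('n \<times> 'm)^('n \<times> 'm)"
  assume "x \<in> {choi \<psi> | \<psi>. mlinear \<psi> \<and> positive_map \<psi>}"
  then obtain \<psi> where "x = choi \<psi>" "mlinear \<psi>" "positive_map \<psi>" by blast
  then show "x \<in> PMS" by (simp add: positive_map_choi_in_PMS)
qed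

theorem lemma2p2:
  fixes \<phi> :: "complex^'n^'n \<Rightarrow> complex^'m^'m"
  assumes "mlinear \<phi>"
  shows "(positive_map \<phi> \<longleftrightarrow> choi (transpose_map \<phi>) \<in> (PMS :: (complex^('n \<times> 'm)^('n \<times> 'm)) set))
       \<and> (choi (transpose_map \<phi>) \<in> (PMS :: (complex^('n \<times> 'm)^('n \<times> 'm)) set) \<longleftrightarrow> choi \<phi> \<in> PMS)
       \<and> (PMS :: (complex^('n \<times> 'm)^('n \<times> 'm)) set) = {choi \<psi> | \<psi>. mlinear \<psi> \<and> positive_map \<psi>}"
proof -
  have "choi \<phi> \<in> PMS \<longleftrightarrow> positive_map \<phi>"
    by (rule choi_in_PMS_iff_positive_map[OF assms])
  moreover have "choi (transpose_map \<phi>) \<in> PMS \<longleftrightarrow> positive_map \<phi>"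
    by (simp only: choi_in_PMS_iff_positive_map[OF mlinear_transpose_map[OF assms]]
        positive_map_transpose_map_iff)
  ultimately show ?thesis
    using PMS_eq_choi_positive_maps by blast
qed

end
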